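(* Fix a general instance satisfying the unique-default-action assumption, with default action $a_0$ and margin $\delta_{\mu_0}>0$. 1. The set $S$ is an upper interval of $[0,1]$: if $\beta\in S$ and $\beta\le\beta'\le1$, then $\beta'\in S$. 2. Every $\beta\in S$ satisfies $\beta\ge\delta_{\mu_0}/\sqrt2$. Hence $\alpha_{\min}:=\inf S\ge\delta_{\mu_0}/\sqrt2$ whenever $S\neq\emptyset$. 3. For $\beta\in(0,1]$, if the threshold-test LP at $\beta$ has a feasible solution with strictly positive objective, then its optimal value is at least $\delta_{\mu_0}/\sqrt2$.
   Context: Finite $\Omega$ and $A$, full-support prior $\mu_0\in\Delta(\Omega)$, receiver utility $u_R$, and $\Delta u_{a,a'}(\omega)=u_R(a,\omega)-u_R(a',\omega)$. Unique-default-action assumption: $\arg\max_a\sum_\omega\mu_0(\omega)u_R(a,\omega)=\{a_0\}$. Margin. Let $R_{a_0}^1=\{\nu\in\Delta(\Omega):\Delta u_{a_0,a'}^\top\nu\ge0\ \forall a'\ne a_0\}$. Define $\delta_{\mu_0}=\min\{\mathrm{dist}(\mu_0,\partial R^1_{a_0}),\mathrm{dist}(\mu_0,\partial\Delta(\Omega))\}$, with Euclidean distances and boundaries relative to the affine hull of the simplex. This is positive under the assumptions. The set $S$ consists of all $\beta\in[0,1]$ for which there exist $a\ne a_0$ and $\nu\in\Delta(\Omega)$ with $\Delta u_{a,a_0}^\top\big((1-\beta)\mu_0+\beta\nu\big)=0$. Threshold-test LP at $\beta$: variables $\pi(a\mid\omega)\ge0$ with $\sum_a\pi(a\mid\omega)=1$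 for all $\omega$. Objective: maximize $\sum_{a\ne a_0}\sum_\omega\pi(a\mid\omega)\mu_0(\omega)$. Constraints: - For all $a$ and all $a'\neq a$: $\sum_\omega\pi(a\mid\omega)\mu_0(\omega)\big[\beta\Delta u_{a,a'}(\omega)+(1-\beta)\sum_{\omega'}\mu_0(\omega')\Delta u_{a,a'}(\omega')\big]\ge0$. - For all $a\ne a_0$: the same expression with $a'=a_0$ equals $0$. *)

theory Defs
  imports "HOL-Analysis.Analysis"
begin

definition belief_simplex :: "(real^'w::finite) set" where
  "belief_simplex = {\<nu>. (\<forall>\<omega>. 0 \<le> \<nu> $ \<omega>) \<and> (\<Sum>\<omega>\<in>UNIV. \<nu> $ \<omega>) = 1}"

definition du :: "('a \<Rightarrow> 'w::finite \<Rightarrow> real) \<Rightarrow> 'a \<Rightarrow> 'a \<Rightarrow> real^'w" where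
  "du u a a' = (\<chi> \<omega>. u a \<omega> - u a' \<omega>)"

definition expected_utility :: "('a \<Rightarrow> 'w::finite \<Rightarrow> real) \<Rightarrow> real^'w \<Rightarrow> 'a \<Rightarrow> real" where
  "expected_utility u \<mu> a = (\<Sum>\<omega>\<in>UNIV. \<mu> $ \<omega> * u a \<omega>)"

definition default_region :: "('a \<Rightarrow> 'w::finite \<Rightarrow> real) \<Rightarrow> 'a \<Rightarrow> (real^'w) set" where
  "default_region u a0 = {\<nu>\<in>belief_simplex. \<forall>a'. a' \<noteq> a0 \<longrightarrow> du u a0 a' \<bullet> \<nu> \<ge> 0}"

definition rel_bd :: "(real^'w::finite) set \<Rightarrow> (real^'w) set" where
  "rel_bd S = (subtopology euclidean (affine hull (belief_simplex :: (real^'w) set))) frontier_of S"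

definition margin :: "('a \<Rightarrow> 'w::finite \<Rightarrow> real) \<Rightarrow> real^'w \<Rightarrow> 'a \<Rightarrow> real" where
  "margin u \<mu>0 a0 = min (infdist \<mu>0 (rel_bd (default_region u a0))) (infdist \<mu>0 (rel_bd belief_simplex))"

definition Sset :: "('a \<Rightarrow> 'w::finite \<Rightarrow> real) \<Rightarrow> real^'w \<Rightarrow> 'a \<Rightarrow> real set" where
  "Sset u \<mu>0 a0 = {\<beta>\<in>{0..1}. \<exists>a \<nu>. a \<noteq> a0 \<and> \<nu> \<in> belief_simplex \<and>
      du u a a0 \<bullet> ((1 - \<beta>) *\<^sub>R \<mu>0 + \<beta> *\<^sub>R \<nu>) = 0}"

text \<open>Threshold-test LP at beta; pi a w stands for pi(a | w).\<close>
definition lp_expr :: "('a \<Rightarrow> 'w::finite \<Rightarrow> real) \<Rightarrow> real^'w \<Rightarrow> real \<Rightarrow> ('a \<Rightarrow> 'w \<Rightarrow> real)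
    \<Rightarrow> 'a \<Rightarrow> 'a \<Rightarrow> real" where
  "lp_expr u \<mu>0 \<beta> \<pi> a a' = (\<Sum>\<omega>\<in>UNIV. \<pi> a \<omega> * \<mu>0 $ \<omega> *
      (\<beta> * (du u a a') $ \<omega> + (1 - \<beta>) * (\<Sum>\<omega>'\<in>UNIV. \<mu>0 $ \<omega>' * (du u a a') $ \<omega>')))"

definition lp_feasible :: "('a::finite \<Rightarrow> 'w::finite \<Rightarrow> real) \<Rightarrow> real^'w \<Rightarrow> 'a \<Rightarrow> real
    \<Rightarrow> ('a \<Rightarrow> 'w \<Rightarrow> real) \<Rightarrow> bool" where
  "lp_feasible u \<mu>0 a0 \<beta> \<pi> \<longleftrightarrow>
     (\<forall>a \<omega>. 0 \<le> \<pi> a \<omega>) \<and> (\<forall>\<omega>. (\<Sum>a\<in>UNIV. \<pi> a \<omega>) = 1) \<and>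
     (\<forall>a a'. a' \<noteq> a \<longrightarrow> lp_expr u \<mu>0 \<beta> \<pi> a a' \<ge> 0) \<and>
     (\<forall>a. a \<noteq> a0 \<longrightarrow> lp_expr u \<mu>0 \<beta> \<pi> a a0 = 0)"

definition lp_obj :: "real^'w::finite \<Rightarrow> 'a::finite \<Rightarrow> ('a \<Rightarrow> 'w \<Rightarrow> real) \<Rightarrow> real" where
  "lp_obj \<mu>0 a0 \<pi> = (\<Sum>a\<in>{a. a \<noteq> a0}. \<Sum>\<omega>\<in>UNIV. \<pi> a \<omega> * \<mu>0 $ \<omega>)"

definition lp_value :: "('a::finite \<Rightarrow> 'w::finite \<Rightarrow> real) \<Rightarrow> real^'w \<Rightarrow> 'a \<Rightarrow> real \<Rightarrow> real" where
  "lp_value u \<mu>0 a0 \<beta> = (SUP \<pi>\<in>{\<pi>. lp_feasible u \<mu>0 a0 \<beta> \<pi>}. lp_obj \<mu>0 a0 \<pi>)"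

end

theory Submission
  imports Defs
begin

text \<open>The unique default action makes every \<open>a \<noteq> a0\<close> strictly worse than \<open>a0\<close> at \<open>\<mu>0\<close>,
  and the margin \<open>\<delta>\<close> guarantees that every point of the affine hull of the simplex within
  distance \<open>\<delta>\<close> of \<open>\<mu>0\<close> is a belief at which \<open>a0\<close> is optimal. Two beliefs are at most
  \<open>sqrt 2\<close> apart, so moving from \<open>\<mu>0\<close> a fraction \<open>\<beta> < \<delta> / sqrt 2\<close> towards any belief stays
  in that ball; no action can then tie with \<open>a0\<close>, which bounds \<open>S\<close> from below.
  For the LP, a feasible policy that recommends some \<open>a \<noteq> a0\<close> with positive probability
  yields an obedient posterior \<open>\<nu>\<close> for \<open>a\<close>. Splitting \<open>\<mu>0\<close> between \<open>\<nu>\<close> and the belief at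
  distance \<open>\<delta>\<close> from \<open>\<mu>0\<close> on the opposite ray gives a policy with two recommendations that
  is still obedient and recommends \<open>a\<close> with probability
  \<open>\<delta> / (norm (\<mu>0 - \<nu>) + \<delta>) \<ge> \<delta> / sqrt 2\<close>.\<close>

lemma dist_affine_combination:
  fixes x y :: "'a::real_normed_vector"
  shows "dist x ((1 - t) *\<^sub>R x + t *\<^sub>R y) = \<bar>t\<bar> * dist x y"
proof -
  have "(1 - t) *\<^sub>R x + t *\<^sub>R y - x = t *\<^sub>R (y - x)"
    by (simp add: algebra_simps)
  then show ?thesis
    by (metis dist_commute dist_norm norm_scaleR)
qed

lemma mem_closed_if_dist_le_infdist_frontier_of:
  fixes T A :: "'a::real_normed_vector set"
  assumes "closed T" "convex A" "x \<in> T" "x \<in> A" "z \<in> A"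
    and dist_le: "dist x z \<le> infdist x (subtopology euclidean A frontier_of T)"
  shows "z \<in> T"
proof (rule ccontr)
  assume "z \<notin> T"
  let ?X = "subtopology euclidean A"
  have "connectedin ?X (closed_segment x z)"
    using assms by (simp add: connectedin_subtopology closed_segment_subset)
  moreover have "closed_segment x z \<inter> T \<noteq> {}" "closed_segment x z - T \<noteq> {}"
    using \<open>x \<in> T\<close> \<open>z \<notin> T\<close> by auto
  ultimately obtain w where w: "w \<in> closed_segment x z" "w \<in> ?X frontier_of T"
    using connectedin_Int_frontier_of by blast
  have "?X frontier_of T \<subseteq> euclidean closure_of T"
    using closure_of_subtopology_subset by (fastforce simp: frontier_of_def)
  then have "w \<in> T"
    using w \<open>closed T\<close> by auto
  obtain t where t: "0 \<le> t" "t \<le> 1" "w = (1 - t) *\<^sub>R x + t *\<^sub>R z"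
    using w by (auto simp: in_segment)
  have "t \<noteq> 1"
    using t \<open>w \<in> T\<close> \<open>z \<notin> T\<close> by auto
  moreover have "dist x z > 0"
    using \<open>x \<in> T\<close> \<open>z \<notin> T\<close> by auto
  ultimately have "dist x w < dist x z"
    using t by (simp add: dist_affine_combination)
  moreover have "infdist x (?X frontier_of T) \<le> dist x w"
    using w by (simp add: infdist_le)
  ultimately show False
    using dist_le by linarith
qed

lemma mem_if_dist_le_infdist_rel_bd:
  assumes "closed T" "x \<in> T" "x \<in> affine hull belief_simplex" "z \<in> affine hull belief_simplex"
    and "dist x z \<le> infdist x (rel_bd T)"
  shows "z \<in> T"
  using mem_closed_if_dist_le_infdist_frontier_of[OF _ convex_affine_hull] assms
  by (simp add: rel_bd_def)

lemma belief_simplex_nonneg: "\<nu> \<in> belief_simplex \<Longrightarrow> 0 \<le> \<nu> $ \<omega>"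
  by (simp add: belief_simplex_def)

lemma belief_simplex_sum: "\<nu> \<in> belief_simplex \<Longrightarrow> (\<Sum>\<omega>\<in>UNIV. \<nu> $ \<omega>) = 1"
  by (simp add: belief_simplex_def)

lemma belief_simplex_le_one:
  assumes "\<nu> \<in> belief_simplex"
  shows "\<nu> $ \<omega> \<le> 1"
proof -
  have "\<nu> $ \<omega> \<le> (\<Sum>\<omega>'\<in>UNIV. \<nu> $ \<omega>')"
    using assms by (intro member_le_sum) (auto simp: belief_simplex_def)
  then show ?thesis
    using assms by (simp add: belief_simplex_def)
qed

lemma convex_belief_simplex: "convex belief_simplex"
  unfolding convex_def belief_simplex_def
  by (auto simp: sum.distrib sum_distrib_left[symmetric])

lemma closed_belief_simplex: "closed (belief_simplex :: (real^'w::finite) set)"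
proof -
  have "belief_simplex = (\<Inter>\<omega>. {\<nu>::real^'w. 0 \<le> \<nu> $ \<omega>}) \<inter> {\<nu>. (\<Sum>\<omega>\<in>UNIV. \<nu> $ \<omega>) = 1}"
    by (auto simp: belief_simplex_def)
  moreover have "closed \<dots>"
    by (intro closed_Int closed_INT ballI closed_Collect_le closed_Collect_eq continuous_intros)
  ultimately show ?thesis
    by simp
qed

lemma closed_default_region: "closed (default_region u a0)"
proof -
  have "default_region u a0 = belief_simplex \<inter> (\<Inter>a\<in>{a. a \<noteq> a0}. {\<nu>. 0 \<le> du u a0 a \<bullet> \<nu>})"
    by (auto simp: default_region_def)
  moreover have "closed \<dots>"
    by (intro closed_Int closed_belief_simplex closed_INT ballI closed_Collect_le continuous_intros)
  ultimately show ?thesis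
    by simp
qed

lemma norm_diff_belief_simplex_le:
  assumes "\<mu> \<in> belief_simplex" "\<nu> \<in> belief_simplex"
  shows "norm (\<nu> - \<mu>) \<le> sqrt 2"
proof -
  have "((\<nu> - \<mu>) $ \<omega>)\<^sup>2 \<le> \<nu> $ \<omega> + \<mu> $ \<omega>" for \<omega>
  proof -
    have "0 \<le> \<nu> $ \<omega>" "\<nu> $ \<omega> \<le> 1" "0 \<le> \<mu> $ \<omega>" "\<mu> $ \<omega> \<le> 1"
      using assms belief_simplex_nonneg belief_simplex_le_one by auto
    then show ?thesis
      by (simp add: power2_eq_square algebra_simps) (smt (verit) mult_left_le mult_nonneg_nonneg)
  qed
  then have "(\<Sum>\<omega>\<in>UNIV. ((\<nu> - \<mu>) $ \<omega>)\<^sup>2) \<le> (\<Sum>\<omega>\<in>UNIV. \<nu> $ \<omega> + \<mu> $ \<omega>)"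
    by (rule sum_mono)
  also have "\<dots> = 2"
    using assms by (simp add: sum.distrib belief_simplex_sum)
  finally show ?thesis
    by (simp add: norm_vec_def L2_set_def)
qed

lemma inner_du: "du u a b \<bullet> \<mu> = expected_utility u \<mu> a - expected_utility u \<mu> b"
  by (simp add: du_def inner_vec_def expected_utility_def sum_subtractf algebra_simps)

lemma unique_default_strict:
  assumes "{a. \<forall>b. expected_utility u \<mu> b \<le> expected_utility u \<mu> a} = {a0}" "a \<noteq> a0"
  shows "expected_utility u \<mu> a < expected_utility u \<mu> a0"
proof -
  have "a \<notin> {a. \<forall>b. expected_utility u \<mu> b \<le> expected_utility u \<mu> a}"
    using assms by blast
  then obtain b where "expected_utility u \<mu> a < expected_utility u \<mu> b"
    by (auto simp: not_le)
  moreover have "expected_utility u \<mu> b \<le> expected_utility u \<mu> a0"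
    using assms(1) by blast
  ultimately show ?thesis
    by linarith
qed

lemma prior_mem_default_region:
  assumes "\<mu>0 \<in> belief_simplex"
    and "\<And>a. a \<noteq> a0 \<Longrightarrow> expected_utility u \<mu>0 a < expected_utility u \<mu>0 a0"
  shows "\<mu>0 \<in> default_region u a0"
  using assms by (auto simp: default_region_def inner_du less_imp_le)

lemma affine_combination_mem_default_region:
  assumes prior: "\<mu>0 \<in> belief_simplex"
    and strict: "\<And>a. a \<noteq> a0 \<Longrightarrow> expected_utility u \<mu>0 a < expected_utility u \<mu>0 a0"
    and \<nu>: "\<nu> \<in> belief_simplex"
    and close: "\<bar>t\<bar> * dist \<mu>0 \<nu> \<le> infdist \<mu>0 (rel_bd (default_region u a0))"
  shows "(1 - t) *\<^sub>R \<mu>0 + t *\<^sub>R \<nu> \<in> default_region u a0"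
proof (rule mem_if_dist_le_infdist_rel_bd[OF closed_default_region])
  show "\<mu>0 \<in> default_region u a0"
    using prior strict by (rule prior_mem_default_region)
  show "\<mu>0 \<in> affine hull belief_simplex"
    using prior by (rule hull_inc)
  show "(1 - t) *\<^sub>R \<mu>0 + t *\<^sub>R \<nu> \<in> affine hull belief_simplex"
    using prior \<nu> by (intro mem_affine[OF affine_affine_hull] hull_inc) auto
  show "dist \<mu>0 ((1 - t) *\<^sub>R \<mu>0 + t *\<^sub>R \<nu>) \<le> infdist \<mu>0 (rel_bd (default_region u a0))"
    using close by (simp add: dist_affine_combination)
qed

lemma Sset_pos:
  assumes strict: "\<And>a. a \<noteq> a0 \<Longrightarrow> expected_utility u \<mu>0 a < expected_utility u \<mu>0 a0"
    and "\<beta> \<in> Sset u \<mu>0 a0"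
  shows "0 < \<beta>"
proof -
  obtain a \<nu> where "a \<noteq> a0" "0 \<le> \<beta>" "du u a a0 \<bullet> ((1 - \<beta>) *\<^sub>R \<mu>0 + \<beta> *\<^sub>R \<nu>) = 0"
    using assms(2) by (auto simp: Sset_def)
  then show ?thesis
    using strict[of a] by (cases "\<beta> = 0") (auto simp: inner_du)
qed

lemma Sset_upward_closed:
  assumes prior: "\<mu>0 \<in> belief_simplex"
    and strict: "\<And>a. a \<noteq> a0 \<Longrightarrow> expected_utility u \<mu>0 a < expected_utility u \<mu>0 a0"
    and "\<beta> \<in> Sset u \<mu>0 a0" "\<beta> \<le> \<beta>'" "\<beta>' \<le> 1"
  shows "\<beta>' \<in> Sset u \<mu>0 a0"
proof -
  obtain a \<nu> where a: "a \<noteq> a0" and \<nu>: "\<nu> \<in> belief_simplex"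
    and tie: "du u a a0 \<bullet> ((1 - \<beta>) *\<^sub>R \<mu>0 + \<beta> *\<^sub>R \<nu>) = 0"
    using assms(3) by (auto simp: Sset_def)
  have "0 < \<beta>"
    using Sset_pos[OF strict assms(3)] .
  then have "0 < \<beta>'"
    using assms(4) by linarith
  define \<nu>' where "\<nu>' = (1 - \<beta> / \<beta>') *\<^sub>R \<mu>0 + (\<beta> / \<beta>') *\<^sub>R \<nu>"
  have "\<nu>' \<in> belief_simplex"
    unfolding \<nu>'_def using \<open>0 < \<beta>\<close> \<open>0 < \<beta>'\<close> assms(4)
    by (intro convexD_alt[OF convex_belief_simplex prior \<nu>]) auto
  moreover have "(1 - \<beta>') *\<^sub>R \<mu>0 + \<beta>' *\<^sub>R \<nu>' = (1 - \<beta>) *\<^sub>R \<mu>0 + \<beta> *\<^sub>R \<nu>"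
    using \<open>0 < \<beta>'\<close> by (simp add: \<nu>'_def vec_eq_iff field_simps)
  then have "du u a a0 \<bullet> ((1 - \<beta>') *\<^sub>R \<mu>0 + \<beta>' *\<^sub>R \<nu>') = 0"
    using tie by simp
  moreover have "\<beta>' \<in> {0..1}"
    using \<open>0 < \<beta>'\<close> assms(5) by simp
  ultimately show ?thesis
    using a unfolding Sset_def by blast
qed

lemma Sset_ge_infdist_div_sqrt2:
  assumes prior: "\<mu>0 \<in> belief_simplex"
    and strict: "\<And>a. a \<noteq> a0 \<Longrightarrow> expected_utility u \<mu>0 a < expected_utility u \<mu>0 a0"
    and "\<beta> \<in> Sset u \<mu>0 a0"
  shows "infdist \<mu>0 (rel_bd (default_region u a0)) / sqrt 2 \<le> \<beta>"
proof (rule ccontr)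
  define t where "t = infdist \<mu>0 (rel_bd (default_region u a0)) / sqrt 2"
  assume "\<not> t \<le> \<beta>"
  obtain a \<nu> where a: "a \<noteq> a0" and \<nu>: "\<nu> \<in> belief_simplex"
    and tie: "du u a a0 \<bullet> ((1 - \<beta>) *\<^sub>R \<mu>0 + \<beta> *\<^sub>R \<nu>) = 0"
    using assms(3) by (auto simp: Sset_def)
  define z where "z = (1 - t) *\<^sub>R \<mu>0 + t *\<^sub>R \<nu>"
  \<comment> \<open>\<open>s \<mapsto> du u a a0 \<bullet> ((1 - s) *\<^sub>R \<mu>0 + s *\<^sub>R \<nu>)\<close> is affine, negative at \<open>0\<close> and zero
    at \<open>\<beta> > 0\<close>, hence positive at \<open>t > \<beta>\<close>.\<close>
  have "0 < du u a a0 \<bullet> z"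
  proof -
    define c d where "c = du u a a0 \<bullet> \<mu>0" and "d = du u a a0 \<bullet> \<nu>"
    have "c < 0"
      using strict[OF a] by (simp add: c_def inner_du)
    have "(1 - \<beta>) * c + \<beta> * d = 0"
      using tie by (simp add: c_def d_def inner_add_right)
    then have \<beta>d: "\<beta> * d = - ((1 - \<beta>) * c)"
      by linarith
    have "\<beta> * ((1 - t) * c + t * d) = (1 - t) * \<beta> * c + t * (\<beta> * d)"
      by (simp add: algebra_simps)
    also have "\<dots> = c * (\<beta> - t)"
      unfolding \<beta>d by (simp add: algebra_simps)
    also have "\<dots> > 0"
      using \<open>c < 0\<close> \<open>\<not> t \<le> \<beta>\<close> by (simp add: mult_neg_neg)
    finally show ?thesis
      using Sset_pos[OF strict assms(3)]
      by (simp add: z_def c_def d_def inner_add_right zero_less_mult_iff)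
  qed
  moreover have "z \<in> default_region u a0"
    unfolding z_def
  proof (rule affine_combination_mem_default_region[OF prior strict \<nu>])
    have "0 \<le> t"
      by (simp add: t_def infdist_nonneg)
    then have "\<bar>t\<bar> * dist \<mu>0 \<nu> \<le> t * sqrt 2"
      using norm_diff_belief_simplex_le[OF prior \<nu>]
      by (simp add: dist_norm norm_minus_commute mult_left_mono)
    then show "\<bar>t\<bar> * dist \<mu>0 \<nu> \<le> infdist \<mu>0 (rel_bd (default_region u a0))"
      by (simp add: t_def)
  qed
  ultimately show False
    using a by (auto simp: default_region_def inner_du)
qed

\<comment> \<open>\<open>q\<close> is the probability of recommending \<open>b\<close> and \<open>\<rho>\<close> the posterior it induces; the LP
  constraints for \<open>b\<close> thus compare utilities at the belief \<open>(1 - \<beta>) *\<^sub>R \<mu>0 + \<beta> *\<^sub>R \<rho>\<close>.\<close>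
lemma lp_expr_eq_scaled_inner:
  assumes "\<And>\<omega>. \<pi> b \<omega> * \<mu>0 $ \<omega> = q * \<rho> $ \<omega>" and "(\<Sum>\<omega>\<in>UNIV. \<rho> $ \<omega>) = 1"
  shows "lp_expr u \<mu>0 \<beta> \<pi> b a' = q * (du u b a' \<bullet> ((1 - \<beta>) *\<^sub>R \<mu>0 + \<beta> *\<^sub>R \<rho>))"
proof -
  define f where "f = du u b a'"
  have "lp_expr u \<mu>0 \<beta> \<pi> b a' = (\<Sum>\<omega>\<in>UNIV. q * \<rho> $ \<omega> * (\<beta> * f $ \<omega> + (1 - \<beta>) * (f \<bullet> \<mu>0)))"
    using assms(1) by (simp add: lp_expr_def f_def[symmetric] inner_vec_def mult.commute)
  also have "\<dots> = (\<Sum>\<omega>\<in>UNIV. q * \<beta> * (f $ \<omega> * \<rho> $ \<omega>)) + (\<Sum>\<omega>\<in>UNIV. q * (1 - \<beta>) * (f \<bullet> \<mu>0) * \<rho> $ \<omega>)"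
    by (subst sum.distrib[symmetric]) (rule sum.cong, simp_all add: algebra_simps)
  also have "\<dots> = q * \<beta> * (\<Sum>\<omega>\<in>UNIV. f $ \<omega> * \<rho> $ \<omega>) + q * (1 - \<beta>) * (f \<bullet> \<mu>0) * (\<Sum>\<omega>\<in>UNIV. \<rho> $ \<omega>)"
    by (simp add: sum_distrib_left)
  also have "\<dots> = q * (f \<bullet> ((1 - \<beta>) *\<^sub>R \<mu>0 + \<beta> *\<^sub>R \<rho>))"
  proof -
    have "(\<Sum>\<omega>\<in>UNIV. f $ \<omega> * \<rho> $ \<omega>) = f \<bullet> \<rho>"
      by (simp add: inner_vec_def)
    then show ?thesis
      using assms(2) by (simp add: inner_add_right algebra_simps)
  qed
  finally show ?thesis
    by (simp add: f_def)
qed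

lemma lp_obj_le_one:
  assumes "\<mu>0 \<in> belief_simplex" "lp_feasible u \<mu>0 a0 \<beta> \<pi>"
  shows "lp_obj \<mu>0 a0 \<pi> \<le> 1"
proof -
  have "lp_obj \<mu>0 a0 \<pi> \<le> (\<Sum>b\<in>UNIV. \<Sum>\<omega>\<in>UNIV. \<pi> b \<omega> * \<mu>0 $ \<omega>)"
    unfolding lp_obj_def using assms
    by (intro sum_mono2 sum_nonneg mult_nonneg_nonneg)
      (auto simp: lp_feasible_def belief_simplex_def)
  also have "\<dots> = (\<Sum>\<omega>\<in>UNIV. (\<Sum>b\<in>UNIV. \<pi> b \<omega>) * \<mu>0 $ \<omega>)"
    by (subst sum.swap) (simp add: sum_distrib_right)
  also have "\<dots> = 1"
    using assms by (simp add: lp_feasible_def belief_simplex_sum)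
  finally show ?thesis .
qed

lemma lp_obj_le_lp_value:
  assumes "\<mu>0 \<in> belief_simplex" "lp_feasible u \<mu>0 a0 \<beta> \<pi>"
  shows "lp_obj \<mu>0 a0 \<pi> \<le> lp_value u \<mu>0 a0 \<beta>"
  unfolding lp_value_def using assms lp_obj_le_one[OF assms(1)]
  by (intro cSUP_upper bdd_aboveI[of _ 1]) auto

lemma lp_obj_pos_ex_action:
  assumes "0 < lp_obj \<mu>0 a0 \<pi>"
  shows "\<exists>a. a \<noteq> a0 \<and> 0 < (\<Sum>\<omega>\<in>UNIV. \<pi> a \<omega> * \<mu>0 $ \<omega>)"
proof (rule ccontr)
  assume "\<not> ?thesis"
  then have "lp_obj \<mu>0 a0 \<pi> \<le> 0"
    unfolding lp_obj_def by (intro sum_nonpos[of "{b. b \<noteq> a0}"]) (auto simp: not_less)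
  then show False
    using assms by simp
qed

lemma lp_feasible_obedient_posterior:
  assumes prior: "\<mu>0 \<in> belief_simplex" and feasible: "lp_feasible u \<mu>0 a0 \<beta> \<pi>"
    and "a \<noteq> a0" and p_pos: "0 < (\<Sum>\<omega>\<in>UNIV. \<pi> a \<omega> * \<mu>0 $ \<omega>)"
  obtains \<nu> where "\<nu> \<in> belief_simplex"
    and "\<And>a'. a' \<noteq> a \<Longrightarrow> 0 \<le> du u a a' \<bullet> ((1 - \<beta>) *\<^sub>R \<mu>0 + \<beta> *\<^sub>R \<nu>)"
    and "du u a a0 \<bullet> ((1 - \<beta>) *\<^sub>R \<mu>0 + \<beta> *\<^sub>R \<nu>) = 0"
proof
  define p where "p = (\<Sum>\<omega>\<in>UNIV. \<pi> a \<omega> * \<mu>0 $ \<omega>)"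
  define \<nu> where "\<nu> = (\<chi> \<omega>. \<pi> a \<omega> * \<mu>0 $ \<omega> / p)"
  have \<pi>_nonneg: "\<And>b \<omega>. 0 \<le> \<pi> b \<omega>"
    using feasible by (simp add: lp_feasible_def)
  show \<nu>_simplex: "\<nu> \<in> belief_simplex"
    using p_pos \<pi>_nonneg prior
    by (auto simp: belief_simplex_def \<nu>_def p_def sum_divide_distrib[symmetric]
        intro!: divide_nonneg_pos mult_nonneg_nonneg belief_simplex_nonneg)
  have "\<And>\<omega>. \<pi> a \<omega> * \<mu>0 $ \<omega> = p * \<nu> $ \<omega>"
    using p_pos by (simp add: \<nu>_def p_def)
  from lp_expr_eq_scaled_inner[where \<pi>=\<pi> and b=a, OF this belief_simplex_sum[OF \<nu>_simplex]]
  have lp_expr_a: "lp_expr u \<mu>0 \<beta> \<pi> a a' = p * (du u a a' \<bullet> ((1 - \<beta>) *\<^sub>R \<mu>0 + \<beta> *\<^sub>R \<nu>))" for a'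
    .
  show "0 \<le> du u a a' \<bullet> ((1 - \<beta>) *\<^sub>R \<mu>0 + \<beta> *\<^sub>R \<nu>)" if "a' \<noteq> a" for a'
  proof -
    have "0 \<le> lp_expr u \<mu>0 \<beta> \<pi> a a'"
      using feasible that by (simp add: lp_feasible_def)
    then show ?thesis
      using p_pos by (simp add: lp_expr_a p_def zero_le_mult_iff)
  qed
  show "du u a a0 \<bullet> ((1 - \<beta>) *\<^sub>R \<mu>0 + \<beta> *\<^sub>R \<nu>) = 0"
    using feasible \<open>a \<noteq> a0\<close> lp_expr_a[of a0] p_pos by (simp add: lp_feasible_def p_def)
qed

lemma belief_simplex_split_prior:
  assumes prior: "\<mu>0 \<in> belief_simplex" and \<nu>: "\<nu> \<in> belief_simplex" "\<nu> \<noteq> \<mu>0"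
    and m: "0 < m" "m \<le> infdist \<mu>0 (rel_bd belief_simplex)"
  obtains \<nu>' x where "\<nu>' \<in> belief_simplex" "dist \<mu>0 \<nu>' = m" "m / sqrt 2 \<le> x" "x \<le> 1"
    "\<mu>0 = x *\<^sub>R \<nu> + (1 - x) *\<^sub>R \<nu>'"
proof
  define n where "n = dist \<mu>0 \<nu>"
  have "0 < n"
    using \<nu> by (simp add: n_def)
  \<comment> \<open>the belief at distance \<open>m\<close> from \<open>\<mu>0\<close> on the ray from \<open>\<nu>\<close> through \<open>\<mu>0\<close>\<close>
  define \<nu>' where "\<nu>' = (1 - (- m / n)) *\<^sub>R \<mu>0 + (- m / n) *\<^sub>R \<nu>"
  define x where "x = m / (n + m)"
  show dist_\<nu>': "dist \<mu>0 \<nu>' = m"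
    unfolding \<nu>'_def dist_affine_combination using \<open>0 < n\<close> m by (simp add: n_def)
  show \<nu>'_simplex: "\<nu>' \<in> belief_simplex"
  proof (rule mem_if_dist_le_infdist_rel_bd[OF closed_belief_simplex prior])
    show "\<mu>0 \<in> affine hull belief_simplex"
      using prior by (rule hull_inc)
    show "\<nu>' \<in> affine hull belief_simplex"
      unfolding \<nu>'_def using prior \<nu> by (intro mem_affine[OF affine_affine_hull] hull_inc) auto
    show "dist \<mu>0 \<nu>' \<le> infdist \<mu>0 (rel_bd belief_simplex)"
      using dist_\<nu>' m by simp
  qed
  show "x \<le> 1"
    using \<open>0 < n\<close> m by (simp add: x_def)
  have "\<nu>' - \<nu> = (1 + m / n) *\<^sub>R (\<mu>0 - \<nu>)"
    by (simp add: \<nu>'_def algebra_simps)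
  then have "norm (\<nu>' - \<nu>) = (1 + m / n) * n"
    using \<open>0 < n\<close> m by (simp add: n_def dist_norm)
  also have "\<dots> = n + m"
    using \<open>0 < n\<close> by (simp add: field_simps)
  finally have "norm (\<nu>' - \<nu>) = n + m" .
  then have "n + m \<le> sqrt 2"
    using norm_diff_belief_simplex_le[OF \<nu>(1) \<nu>'_simplex] by simp
  then show "m / sqrt 2 \<le> x"
    using \<open>0 < n\<close> m by (simp add: x_def divide_left_mono)
  have "0 < n + m"
    using \<open>0 < n\<close> m by linarith
  then have "1 - x = n / (n + m)"
    by (simp add: x_def field_simps)
  then have "(1 - x) * (1 + m / n) = 1" "(1 - x) * (m / n) = x"
    using \<open>0 < n\<close> \<open>0 < n + m\<close> by (simp_all add: x_def distrib_left)
  moreover have "x *\<^sub>R \<nu> + (1 - x) *\<^sub>R \<nu>'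
      = ((1 - x) * (1 + m / n)) *\<^sub>R \<mu>0 + (x - (1 - x) * (m / n)) *\<^sub>R \<nu>"
    by (simp add: \<nu>'_def algebra_simps)
  ultimately show "\<mu>0 = x *\<^sub>R \<nu> + (1 - x) *\<^sub>R \<nu>'"
    by simp
qed

lemma lp_feasible_two_recommendations:
  assumes full_support: "\<forall>\<omega>. 0 < \<mu>0 $ \<omega>" and "a \<noteq> a0" and x: "0 \<le> x" "x \<le> 1"
    and \<nu>: "\<nu> \<in> belief_simplex" and \<nu>': "\<nu>' \<in> belief_simplex"
    and split: "\<mu>0 = x *\<^sub>R \<nu> + (1 - x) *\<^sub>R \<nu>'"
    and obedient_a: "\<And>a'. a' \<noteq> a \<Longrightarrow> 0 \<le> du u a a' \<bullet> ((1 - \<beta>) *\<^sub>R \<mu>0 + \<beta> *\<^sub>R \<nu>)"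
    and indifferent: "du u a a0 \<bullet> ((1 - \<beta>) *\<^sub>R \<mu>0 + \<beta> *\<^sub>R \<nu>) = 0"
    and obedient_a0: "\<And>a'. a' \<noteq> a0 \<Longrightarrow> 0 \<le> du u a0 a' \<bullet> ((1 - \<beta>) *\<^sub>R \<mu>0 + \<beta> *\<^sub>R \<nu>')"
  defines "\<pi> \<equiv> \<lambda>b \<omega>. if b = a then x * \<nu> $ \<omega> / \<mu>0 $ \<omega>
                     else if b = a0 then (1 - x) * \<nu>' $ \<omega> / \<mu>0 $ \<omega> else 0"
  shows "lp_feasible u \<mu>0 a0 \<beta> \<pi>" and "lp_obj \<mu>0 a0 \<pi> = x"
proof -
  have \<mu>0_nz: "\<mu>0 $ \<omega> \<noteq> 0" for \<omega>
    using full_support by (metis less_irrefl)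
  have \<pi>_a: "\<pi> a \<omega> * \<mu>0 $ \<omega> = x * \<nu> $ \<omega>" for \<omega>
    using \<mu>0_nz by (simp add: \<pi>_def)
  have \<pi>_a0: "\<pi> a0 \<omega> * \<mu>0 $ \<omega> = (1 - x) * \<nu>' $ \<omega>" for \<omega>
    using \<mu>0_nz \<open>a \<noteq> a0\<close> by (simp add: \<pi>_def)
  have \<pi>_other: "\<pi> b \<omega> = 0" if "b \<noteq> a" "b \<noteq> a0" for b \<omega>
    using that by (simp add: \<pi>_def)
  have lp_expr_a: "lp_expr u \<mu>0 \<beta> \<pi> a a' = x * (du u a a' \<bullet> ((1 - \<beta>) *\<^sub>R \<mu>0 + \<beta> *\<^sub>R \<nu>))" for a'
    by (rule lp_expr_eq_scaled_inner[where \<pi>=\<pi> and b=a, OF \<pi>_a belief_simplex_sum[OF \<nu>]])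
  have lp_expr_a0: "lp_expr u \<mu>0 \<beta> \<pi> a0 a' = (1 - x) * (du u a0 a' \<bullet> ((1 - \<beta>) *\<^sub>R \<mu>0 + \<beta> *\<^sub>R \<nu>'))" for a'
    by (rule lp_expr_eq_scaled_inner[where \<pi>=\<pi> and b=a0, OF \<pi>_a0 belief_simplex_sum[OF \<nu>']])
  have lp_expr_other: "lp_expr u \<mu>0 \<beta> \<pi> b a' = 0" if "b \<noteq> a" "b \<noteq> a0" for b a'
    using that by (simp add: lp_expr_def \<pi>_other)
  show "lp_feasible u \<mu>0 a0 \<beta> \<pi>"
    unfolding lp_feasible_def
  proof (intro conjI allI impI)
    show "0 \<le> \<pi> b \<omega>" for b \<omega>
      using x full_support \<nu> \<nu>' by (simp add: \<pi>_def belief_simplex_nonneg less_imp_le)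
    show "(\<Sum>b\<in>UNIV. \<pi> b \<omega>) = 1" for \<omega>
    proof -
      have "(\<Sum>b\<in>UNIV. \<pi> b \<omega>) = (\<Sum>b\<in>{a, a0}. \<pi> b \<omega>)"
        using \<pi>_other by (intro sum.mono_neutral_right) auto
      also have "\<dots> = (x * \<nu> $ \<omega> + (1 - x) * \<nu>' $ \<omega>) / \<mu>0 $ \<omega>"
        using \<open>a \<noteq> a0\<close> by (simp add: \<pi>_def add_divide_distrib)
      also have "\<dots> = 1"
        using split \<mu>0_nz by (simp add: vec_eq_iff)
      finally show ?thesis .
    qed
    show "0 \<le> lp_expr u \<mu>0 \<beta> \<pi> b a'" if "a' \<noteq> b" for b a'
      using that x obedient_a obedient_a0
      by (cases "b = a"; cases "b = a0") (auto simp: lp_expr_a lp_expr_a0 lp_expr_other)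
    show "lp_expr u \<mu>0 \<beta> \<pi> b a0 = 0" if "b \<noteq> a0" for b
      using that indifferent by (cases "b = a") (auto simp: lp_expr_a lp_expr_other)
  qed
  have "lp_obj \<mu>0 a0 \<pi> = (\<Sum>b\<in>{b. b \<noteq> a0}. if b = a then x else 0)"
    unfolding lp_obj_def
  proof (rule sum.cong)
    show "(\<Sum>\<omega>\<in>UNIV. \<pi> b \<omega> * \<mu>0 $ \<omega>) = (if b = a then x else 0)" if "b \<in> {b. b \<noteq> a0}" for b
      using that \<pi>_other belief_simplex_sum[OF \<nu>]
      by (auto simp: \<pi>_a sum_distrib_left[symmetric])
  qed simp
  also have "\<dots> = x"
    using \<open>a \<noteq> a0\<close> by simp
  finally show "lp_obj \<mu>0 a0 \<pi> = x" .
qed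

lemma lp_value_ge_margin_div_sqrt2:
  assumes prior: "\<mu>0 \<in> belief_simplex" and full_support: "\<forall>\<omega>. 0 < \<mu>0 $ \<omega>"
    and strict: "\<And>a. a \<noteq> a0 \<Longrightarrow> expected_utility u \<mu>0 a < expected_utility u \<mu>0 a0"
    and margin_pos: "0 < margin u \<mu>0 a0" and \<beta>: "0 < \<beta>" "\<beta> \<le> 1"
    and feasible: "lp_feasible u \<mu>0 a0 \<beta> \<pi>" and obj_pos: "0 < lp_obj \<mu>0 a0 \<pi>"
  shows "margin u \<mu>0 a0 / sqrt 2 \<le> lp_value u \<mu>0 a0 \<beta>"
proof -
  define m where "m = margin u \<mu>0 a0"
  obtain a where a: "a \<noteq> a0" and p_pos: "0 < (\<Sum>\<omega>\<in>UNIV. \<pi> a \<omega> * \<mu>0 $ \<omega>)"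
    using lp_obj_pos_ex_action[OF obj_pos] by blast
  obtain \<nu> where \<nu>: "\<nu> \<in> belief_simplex"
    and obedient_a: "\<And>a'. a' \<noteq> a \<Longrightarrow> 0 \<le> du u a a' \<bullet> ((1 - \<beta>) *\<^sub>R \<mu>0 + \<beta> *\<^sub>R \<nu>)"
    and indifferent: "du u a a0 \<bullet> ((1 - \<beta>) *\<^sub>R \<mu>0 + \<beta> *\<^sub>R \<nu>) = 0"
    using lp_feasible_obedient_posterior[OF prior feasible a p_pos] by blast
  have "\<nu> \<noteq> \<mu>0"
  proof
    assume "\<nu> = \<mu>0"
    then have "du u a a0 \<bullet> \<mu>0 = 0"
      using indifferent by (simp flip: scaleR_left_distrib)
    then show False
      using strict[OF a] by (simp add: inner_du)
  qed
  obtain \<nu>' x where \<nu>': "\<nu>' \<in> belief_simplex" "dist \<mu>0 \<nu>' = m" and x: "m / sqrt 2 \<le> x" "x \<le> 1"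
    and split: "\<mu>0 = x *\<^sub>R \<nu> + (1 - x) *\<^sub>R \<nu>'"
    using belief_simplex_split_prior[OF prior \<nu> \<open>\<nu> \<noteq> \<mu>0\<close>, of m] margin_pos
    by (auto simp: m_def margin_def)
  have "(1 - \<beta>) *\<^sub>R \<mu>0 + \<beta> *\<^sub>R \<nu>' \<in> default_region u a0"
  proof (rule affine_combination_mem_default_region[OF prior strict \<nu>'(1)])
    show "\<bar>\<beta>\<bar> * dist \<mu>0 \<nu>' \<le> infdist \<mu>0 (rel_bd (default_region u a0))"
      using \<nu>'(2) \<beta> margin_pos mult_left_le_one_le[of m \<beta>] by (simp add: m_def margin_def)
  qed
  then have obedient_a0: "\<And>a'. a' \<noteq> a0 \<Longrightarrow> 0 \<le> du u a0 a' \<bullet> ((1 - \<beta>) *\<^sub>R \<mu>0 + \<beta> *\<^sub>R \<nu>')"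
    by (simp add: default_region_def)
  have "0 \<le> x"
    using x margin_pos by (simp add: m_def order_trans[OF _ x(1)])
  note two_recommendations = lp_feasible_two_recommendations[OF full_support a \<open>0 \<le> x\<close> x(2)
      \<nu> \<nu>'(1) split obedient_a indifferent obedient_a0]
  show ?thesis
    using lp_obj_le_lp_value[OF prior two_recommendations(1)] two_recommendations(2) x(1)
    by (simp add: m_def)
qed

theorem propositionC1:
  fixes u :: "'a::finite \<Rightarrow> 'w::finite \<Rightarrow> real" and \<mu>0 :: "real^'w" and a0 :: 'a
  assumes prior: "\<mu>0 \<in> belief_simplex" and full_support: "\<forall>\<omega>. 0 < \<mu>0 $ \<omega>"
    and unique_default: "{a. \<forall>b. expected_utility u \<mu>0 b \<le> expected_utility u \<mu>0 a} = {a0}"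
    and margin_pos: "margin u \<mu>0 a0 > 0"
  shows "(\<forall>\<beta> \<beta>'. \<beta> \<in> Sset u \<mu>0 a0 \<and> \<beta> \<le> \<beta>' \<and> \<beta>' \<le> 1 \<longrightarrow> \<beta>' \<in> Sset u \<mu>0 a0)
       \<and> (\<forall>\<beta>\<in>Sset u \<mu>0 a0. \<beta> \<ge> margin u \<mu>0 a0 / sqrt 2)
       \<and> (Sset u \<mu>0 a0 \<noteq> {} \<longrightarrow> Inf (Sset u \<mu>0 a0) \<ge> margin u \<mu>0 a0 / sqrt 2)
       \<and> (\<forall>\<beta>. 0 < \<beta> \<and> \<beta> \<le> 1 \<and> (\<exists>\<pi>. lp_feasible u \<mu>0 a0 \<beta> \<pi> \<and> lp_obj \<mu>0 a0 \<pi> > 0)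
             \<longrightarrow> lp_value u \<mu>0 a0 \<beta> \<ge> margin u \<mu>0 a0 / sqrt 2)"
proof -
  have strict: "\<And>a. a \<noteq> a0 \<Longrightarrow> expected_utility u \<mu>0 a < expected_utility u \<mu>0 a0"
    using unique_default by (rule unique_default_strict)
  have S_lower: "margin u \<mu>0 a0 / sqrt 2 \<le> \<beta>" if "\<beta> \<in> Sset u \<mu>0 a0" for \<beta>
    using Sset_ge_infdist_div_sqrt2[OF prior strict that]
    by (simp add: margin_def divide_right_mono order_trans[rotated])
  show ?thesis
    using Sset_upward_closed[OF prior strict] S_lower
      lp_value_ge_margin_div_sqrt2[OF prior full_support strict margin_pos]
    by (auto intro: cInf_greatest)
qed

end
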